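(* Assume (A1) and (A5). Then: (1) For every $1\le i\le n$ and all $\xi,\eta\in\mathscr C$ with $\xi^i(0)-D^i(\xi)=\eta^i(0)-D^i(\eta)$, there exists $\zeta\in\mathscr C$ with $\zeta\le\xi\wedge\eta$ and $\zeta^i(0)-D^i(\zeta)=\xi^i(0)-D^i(\xi)=\eta^i(0)-D^i(\eta)$. (2) For all $\mu,\nu\in\mathscr P_2(\mathscr C)$ there exists $\tilde\mu\in\mathscr P_2(\mathscr C)$ with $\tilde\mu\le_D\mu$ and $\tilde\mu\le_D\nu$.
   Context: Fix $n\ge1$, $r_0>0$, $\mathscr C=C([-r_0,0];\mathbb R^n)$ with $\|h\|_\infty=\sup_\theta|h(\theta)|$; $\mathscr P_2(\mathscr C)$ the probability measures on $\mathscr C$ with finite second moment of $\|\cdot\|_\infty$. $D:\mathscr C\to\mathbb R^n$; superscript $i$ denotes the $i$-th coordinate. Order: for $\xi,\eta\in\mathscr C$, $\xi\le\eta$ iff $\xi(\theta)\le\eta(\theta)$ coordinatewise for all $\theta\in[-r_0,0]$; $(\xi\wedge\eta)_i=\xi_i\wedge\eta_i$ pointwise; $\xi\le_D\eta$ iff $\xi\le\eta$ and $\xi(0)-D(\xi)\le\eta(0)-D(\eta)$ (coordinatewise in $\mathbb R^n$). $f:\mathscr C\to\mathbb R$ is $D$-increasing if $\xi\le_D\eta\Rightarrow f(\xi)\le f(\eta)$; for probability measures, $\mu\le_D\nu$ iff $\mu(f)\le\nu(f)$ for all bounded measurable $D$-increasing $f$. (A1) $D(0)=0$ and $D(\xi)\ge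 D(\eta)$ whenever $\xi\ge\eta$. (A5) There is $\kappa\in(0,1)$ with $|D(\xi)-D(\eta)|\le\kappa\max_{1\le i\le n}\|\xi^i-\eta^i\|_\infty$. *)

theory Defs
  imports "HOL-Probability.Probability"
begin

definition Cspace :: "real \<Rightarrow> (real \<Rightarrow> real^'n) set" where
  "Cspace r0 = {f. continuous_on {-r0..0} f \<and> (\<forall>\<theta>. \<theta> \<notin> {-r0..0} \<longrightarrow> f \<theta> = 0)}"

definition supnorm :: "real \<Rightarrow> (real \<Rightarrow> real^'n) \<Rightarrow> real" where
  "supnorm r0 f = (SUP \<theta>\<in>{-r0..0}. norm (f \<theta>))"

definition supnorm_coord :: "real \<Rightarrow> 'n \<Rightarrow> (real \<Rightarrow> real^'n) \<Rightarrow> real" where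
  "supnorm_coord r0 i f = (SUP \<theta>\<in>{-r0..0}. \<bar>f \<theta> $ i\<bar>)"

definition Copen :: "real \<Rightarrow> (real \<Rightarrow> real^'n) set set" where
  "Copen r0 = {U. U \<subseteq> Cspace r0 \<and>
      (\<forall>f\<in>U. \<exists>e>0. {g \<in> Cspace r0. supnorm r0 (\<lambda>\<theta>. g \<theta> - f \<theta>) < e} \<subseteq> U)}"

definition Cborel :: "real \<Rightarrow> (real \<Rightarrow> real^'n) measure" where
  "Cborel r0 = sigma (Cspace r0) (Copen r0)"

definition P2 :: "real \<Rightarrow> (real \<Rightarrow> real^'n) measure set" where
  "P2 r0 = {\<mu>. prob_space \<mu> \<and> sets \<mu> = sets (Cborel r0) \<and>
              (\<integral>\<^sup>+ f. ennreal ((supnorm r0 f)\<^sup>2) \<partial>\<mu>) < \<infinity>}"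

definition Cle :: "real \<Rightarrow> (real \<Rightarrow> real^'n) \<Rightarrow> (real \<Rightarrow> real^'n) \<Rightarrow> bool" where
  "Cle r0 \<xi> \<eta> = (\<forall>\<theta>\<in>{-r0..0}. \<forall>i. \<xi> \<theta> $ i \<le> \<eta> \<theta> $ i)"

definition Cmin :: "(real \<Rightarrow> real^'n) \<Rightarrow> (real \<Rightarrow> real^'n) \<Rightarrow> (real \<Rightarrow> real^'n)" where
  "Cmin \<xi> \<eta> = (\<lambda>\<theta>. \<chi> i. min (\<xi> \<theta> $ i) (\<eta> \<theta> $ i))"

definition Dle :: "((real \<Rightarrow> real^'n) \<Rightarrow> real^'n) \<Rightarrow> real \<Rightarrow>
    (real \<Rightarrow> real^'n) \<Rightarrow> (real \<Rightarrow> real^'n) \<Rightarrow> bool" where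
  "Dle D r0 \<xi> \<eta> = (Cle r0 \<xi> \<eta> \<and> (\<forall>i. \<xi> 0 $ i - D \<xi> $ i \<le> \<eta> 0 $ i - D \<eta> $ i))"

definition D_increasing :: "((real \<Rightarrow> real^'n) \<Rightarrow> real^'n) \<Rightarrow> real \<Rightarrow>
    ((real \<Rightarrow> real^'n) \<Rightarrow> real) \<Rightarrow> bool" where
  "D_increasing D r0 f = (\<forall>\<xi>\<in>Cspace r0. \<forall>\<eta>\<in>Cspace r0. Dle D r0 \<xi> \<eta> \<longrightarrow> f \<xi> \<le> f \<eta>)"

definition Dle_meas :: "((real \<Rightarrow> real^'n) \<Rightarrow> real^'n) \<Rightarrow> real \<Rightarrow>
    (real \<Rightarrow> real^'n) measure \<Rightarrow> (real \<Rightarrow> real^'n) measure \<Rightarrow> bool" where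
  "Dle_meas D r0 \<mu> \<nu> = (\<forall>f. f \<in> borel_measurable (Cborel r0) \<longrightarrow>
      (\<exists>c. \<forall>x\<in>Cspace r0. \<bar>f x\<bar> \<le> c) \<longrightarrow> D_increasing D r0 f \<longrightarrow>
      (\<integral>x. f x \<partial>\<mu>) \<le> (\<integral>x. f x \<partial>\<nu>))"

definition A1 :: "((real \<Rightarrow> real^'n) \<Rightarrow> real^'n) \<Rightarrow> real \<Rightarrow> bool" where
  "A1 D r0 = (D (\<lambda>_. 0) = 0 \<and>
     (\<forall>\<xi>\<in>Cspace r0. \<forall>\<eta>\<in>Cspace r0. Cle r0 \<eta> \<xi> \<longrightarrow> (\<forall>i. D \<eta> $ i \<le> D \<xi> $ i)))"

definition A5 :: "((real \<Rightarrow> real^'n) \<Rightarrow> real^'n) \<Rightarrow> real \<Rightarrow> bool" where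
  "A5 D r0 = (\<exists>\<kappa>. 0 < \<kappa> \<and> \<kappa> < 1 \<and>
     (\<forall>\<xi>\<in>Cspace r0. \<forall>\<eta>\<in>Cspace r0.
        norm (D \<xi> - D \<eta>) \<le> \<kappa> * (MAX i\<in>UNIV. supnorm_coord r0 i (\<lambda>\<theta>. \<xi> \<theta> - \<eta> \<theta>))))"

end

theory Submission
  imports Defs
begin

text \<open>
  (1) Lower the coordinatewise minimum \<open>m\<close> of \<open>\<xi>\<close> and \<open>\<eta>\<close> by a constant \<open>t \<ge> 0\<close> in every
  coordinate. By (A1) the \<open>i\<close>-th level \<open>m\<^sup>i(0) - D\<^sup>i(m)\<close> is at least the common level of \<open>\<xi>\<close> and \<open>\<eta>\<close>, and by
  (A5) lowering by \<open>t\<close> decreases the level continuously and at rate at least \<open>1 - \<kappa> > 0\<close>,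
  so the intermediate value theorem hits the common level.

  (2) A path \<open>\<xi>\<close> with \<open>\<parallel>\<xi>\<parallel>\<^sub>\<infinity> \<le> R\<close> dominates, in \<open>\<le>\<^sub>D\<close>, the constant path \<open>-K R\<close> with
  \<open>K = (1 + \<kappa>) / (1 - \<kappa>)\<close>, since (A5) bounds \<open>D(\<xi>) - D(-K R)\<close> by \<open>\<kappa> (1 + K) R = (K - 1) R\<close>.
  Pushing the independent coupling \<open>\<mu> \<otimes> \<nu>\<close> forward along
  \<open>(\<xi>, \<eta>) \<mapsto> -K max(\<parallel>\<xi>\<parallel>\<^sub>\<infinity>, \<parallel>\<eta>\<parallel>\<^sub>\<infinity>)\<close> gives a measure in \<open>P\<^sub>2\<close> below both marginals.
\<close>

lemma Cspace_norm_bdd_above: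
  assumes "f \<in> Cspace r0"
  shows "bdd_above ((\<lambda>\<theta>. norm (f \<theta>)) ` {-r0..0})"
proof -
  have "continuous_on {-r0..0} f" using assms by (simp add: Cspace_def)
  then have "bounded (f ` {-r0..0})"
    by (intro compact_imp_bounded compact_continuous_image) auto
  then obtain B where "\<forall>x\<in>f ` {-r0..0}. norm x \<le> B" by (auto simp: bounded_iff)
  then show ?thesis by (auto simp: bdd_above_def)
qed

lemma norm_le_supnorm:
  assumes "f \<in> Cspace r0" "\<theta> \<in> {-r0..0}"
  shows "norm (f \<theta>) \<le> supnorm r0 f"
  unfolding supnorm_def using Cspace_norm_bdd_above[OF assms(1)] assms(2)
  by (rule cSUP_upper2) auto

lemma component_le_supnorm:
  assumes "f \<in> Cspace r0" "\<theta> \<in> {-r0..0}"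
  shows "\<bar>f \<theta> $ j\<bar> \<le> supnorm r0 f"
  using norm_le_supnorm[OF assms] component_le_norm_cart order_trans by blast

lemma supnorm_nonneg:
  assumes "f \<in> Cspace r0" "r0 \<ge> 0"
  shows "0 \<le> supnorm r0 f"
  using norm_le_supnorm[OF assms(1), of 0] assms(2)
  by (meson atLeastAtMost_iff neg_le_0_iff_le norm_ge_zero order_trans order_refl)

lemma zero_Cspace: "(\<lambda>_. 0) \<in> Cspace r0"
  unfolding Cspace_def by auto

lemma diff_Cspace: "f \<in> Cspace r0 \<Longrightarrow> g \<in> Cspace r0 \<Longrightarrow> (\<lambda>\<theta>. g \<theta> - f \<theta>) \<in> Cspace r0"
  unfolding Cspace_def by (auto intro!: continuous_on_diff)

lemma Cmin_Cspace: "\<xi> \<in> Cspace r0 \<Longrightarrow> \<eta> \<in> Cspace r0 \<Longrightarrow> Cmin \<xi> \<eta> \<in> Cspace r0"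
  unfolding Cspace_def Cmin_def
  by (auto simp: vec_eq_iff intro!: continuous_on_vec_lambda continuous_on_min continuous_on_component)

lemma supnorm_triangle:
  assumes "f \<in> Cspace r0" "g \<in> Cspace r0" "r0 \<ge> 0"
  shows "supnorm r0 g \<le> supnorm r0 f + supnorm r0 (\<lambda>\<theta>. g \<theta> - f \<theta>)"
  unfolding supnorm_def[of r0 g]
proof (rule cSUP_least)
  show "{-r0..0} \<noteq> {}" using assms by auto
  fix \<theta> assume \<theta>: "\<theta> \<in> {-r0..0}"
  have "norm (g \<theta>) \<le> norm (f \<theta>) + norm (g \<theta> - f \<theta>)" by (rule norm_triangle_sub)
  also have "\<dots> \<le> supnorm r0 f + supnorm r0 (\<lambda>\<theta>. g \<theta> - f \<theta>)"
    using norm_le_supnorm[OF assms(1) \<theta>] norm_le_supnorm[OF diff_Cspace[OF assms(1,2)] \<theta>] by simp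
  finally show "norm (g \<theta>) \<le> supnorm r0 f + supnorm r0 (\<lambda>\<theta>. g \<theta> - f \<theta>)" .
qed

lemma space_Cborel [simp]: "space (Cborel r0) = Cspace r0"
  unfolding Cborel_def by (rule space_measure_of_conv)

lemma Copen_subset_Pow: "Copen r0 \<subseteq> Pow (Cspace r0)"
  unfolding Copen_def by auto

lemma Copen_in_sets_Cborel: "U \<in> Copen r0 \<Longrightarrow> U \<in> sets (Cborel r0)"
  unfolding Cborel_def sets_measure_of[OF Copen_subset_Pow] by auto

lemma supnorm_measurable:
  assumes "sets M = sets (Cborel r0)" "r0 \<ge> 0"
  shows "supnorm r0 \<in> borel_measurable M"
proof -
  have "{f \<in> Cspace r0. supnorm r0 f < a} \<in> Copen r0" for a
  proof -
    have "\<exists>e>0. {g \<in> Cspace r0. supnorm r0 (\<lambda>\<theta>. g \<theta> - f \<theta>) < e}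
            \<subseteq> {f \<in> Cspace r0. supnorm r0 f < a}"
      if "f \<in> Cspace r0" "supnorm r0 f < a" for f
      using that supnorm_triangle[OF that(1) _ assms(2)]
      by (intro exI[of _ "a - supnorm r0 f"]) force
    then show ?thesis unfolding Copen_def by blast
  qed
  moreover have "space M = Cspace r0" using sets_eq_imp_space_eq[OF assms(1)] by simp
  ultimately show ?thesis
    unfolding borel_measurable_iff_less assms(1) by (auto intro: Copen_in_sets_Cborel)
qed

definition coord_contraction :: "((real \<Rightarrow> real^'n) \<Rightarrow> real^'n) \<Rightarrow> real \<Rightarrow> real \<Rightarrow> bool" where
  "coord_contraction D r0 \<kappa> \<longleftrightarrow> (\<forall>\<xi>\<in>Cspace r0. \<forall>\<eta>\<in>Cspace r0. \<forall>B i.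
     (\<forall>\<theta>\<in>{-r0..0}. \<forall>j. \<bar>\<xi> \<theta> $ j - \<eta> \<theta> $ j\<bar> \<le> B) \<longrightarrow> \<bar>D \<xi> $ i - D \<eta> $ i\<bar> \<le> \<kappa> * B)"

lemma coord_contractionD:
  assumes "coord_contraction D r0 \<kappa>" "\<xi> \<in> Cspace r0" "\<eta> \<in> Cspace r0"
    and "\<And>\<theta> j. \<theta> \<in> {-r0..0} \<Longrightarrow> \<bar>\<xi> \<theta> $ j - \<eta> \<theta> $ j\<bar> \<le> B"
  shows "\<bar>D \<xi> $ i - D \<eta> $ i\<bar> \<le> \<kappa> * B"
  using assms unfolding coord_contraction_def by blast

lemma A5_imp_coord_contraction:
  assumes "A5 D r0" "r0 \<ge> 0"
  obtains \<kappa> where "0 < \<kappa>" "\<kappa> < 1" "coord_contraction D r0 \<kappa>"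
proof -
  obtain \<kappa> where \<kappa>: "0 < \<kappa>" "\<kappa> < 1" and lip: "\<forall>\<xi>\<in>Cspace r0. \<forall>\<eta>\<in>Cspace r0.
      norm (D \<xi> - D \<eta>) \<le> \<kappa> * (MAX j\<in>UNIV. supnorm_coord r0 j (\<lambda>\<theta>. \<xi> \<theta> - \<eta> \<theta>))"
    using assms(1) by (auto simp: A5_def)
  have "\<bar>D \<xi> $ i - D \<eta> $ i\<bar> \<le> \<kappa> * B"
    if \<xi>: "\<xi> \<in> Cspace r0" and \<eta>: "\<eta> \<in> Cspace r0"
      and B: "\<forall>\<theta>\<in>{-r0..0}. \<forall>j. \<bar>\<xi> \<theta> $ j - \<eta> \<theta> $ j\<bar> \<le> B" for \<xi> \<eta> B i
  proof -
    have "supnorm_coord r0 j (\<lambda>\<theta>. \<xi> \<theta> - \<eta> \<theta>) \<le> B" for j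
      unfolding supnorm_coord_def using B assms(2) by (intro cSUP_least) auto
    then have "(MAX j\<in>UNIV. supnorm_coord r0 j (\<lambda>\<theta>. \<xi> \<theta> - \<eta> \<theta>)) \<le> B"
      by (subst Max_le_iff) auto
    then have "norm (D \<xi> - D \<eta>) \<le> \<kappa> * B"
      using lip \<xi> \<eta> \<kappa> by (meson less_eq_real_def mult_left_mono order_trans)
    then show ?thesis using component_le_norm_cart[of "D \<xi> - D \<eta>" i] by simp
  qed
  then show ?thesis using that \<kappa> unfolding coord_contraction_def by blast
qed

definition shift_down :: "real \<Rightarrow> (real \<Rightarrow> real^'n) \<Rightarrow> real \<Rightarrow> (real \<Rightarrow> real^'n)" where
  "shift_down r0 m t = (\<lambda>\<theta>. if \<theta> \<in> {-r0..0} then m \<theta> - (\<chi> j. t) else 0)"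

lemma shift_down_Cspace: "m \<in> Cspace r0 \<Longrightarrow> shift_down r0 m t \<in> Cspace r0"
  unfolding Cspace_def shift_down_def
  by (auto intro!: continuous_on_diff continuous_on_const
      intro: continuous_on_cong[THEN iffD1, rotated])

lemma shift_down_0: "m \<in> Cspace r0 \<Longrightarrow> shift_down r0 m 0 = m"
  unfolding Cspace_def shift_down_def by (auto simp: vec_eq_iff)

lemma shift_down_component [simp]: "\<theta> \<in> {-r0..0} \<Longrightarrow> shift_down r0 m t \<theta> $ j = m \<theta> $ j - t"
  by (simp add: shift_down_def)

lemma Cle_shift_down: "t \<ge> 0 \<Longrightarrow> Cle r0 (shift_down r0 m t) m"
  by (simp add: Cle_def)

lemma D_shift_down_lipschitz:
  assumes "coord_contraction D r0 \<kappa>" "m \<in> Cspace r0"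
  shows "\<bar>D (shift_down r0 m t) $ i - D (shift_down r0 m s) $ i\<bar> \<le> \<kappa> * \<bar>t - s\<bar>"
  by (intro coord_contractionD[OF assms(1) shift_down_Cspace[OF assms(2)] shift_down_Cspace[OF assms(2)]]) auto

lemma exists_shift_down_on_level:
  fixes D :: "(real \<Rightarrow> real^'n) \<Rightarrow> real^'n"
  assumes r0: "r0 \<ge> 0" and \<kappa>: "0 \<le> \<kappa>" "\<kappa> < 1" and D: "coord_contraction D r0 \<kappa>"
    and m: "m \<in> Cspace r0" and c: "c \<le> m 0 $ i - D m $ i"
  shows "\<exists>t\<ge>0. shift_down r0 m t 0 $ i - D (shift_down r0 m t) $ i = c"
proof -
  define h where "h t = shift_down r0 m t 0 $ i - D (shift_down r0 m t) $ i" for t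
  have h: "h t = m 0 $ i - t - D (shift_down r0 m t) $ i" for t
    using r0 by (simp add: h_def)
  define T where "T = (h 0 - c) / (1 - \<kappa>)"
  have h0: "c \<le> h 0" using c m by (simp add: h_def shift_down_0)
  then have T: "T \<ge> 0" using \<kappa> by (simp add: T_def)
  \<comment> \<open>along the shift the level drops at rate at least \<open>1 - \<kappa>\<close>, so it reaches \<open>c\<close> by time \<open>T\<close>\<close>
  have "h T \<le> h 0 - (1 - \<kappa>) * T"
    using D_shift_down_lipschitz[OF D m, where t=0 and s=T and i=i] T by (simp add: h algebra_simps)
  also have "(1 - \<kappa>) * T = h 0 - c" using \<kappa> by (simp add: T_def)
  finally have hT: "h T \<le> c" by simp
  have "lipschitz_on (1 + \<kappa>) {0..T} h"
  proof (rule lipschitz_onI)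
    fix s t
    have "\<bar>h s - h t\<bar> \<le> \<bar>s - t\<bar> + \<bar>D (shift_down r0 m s) $ i - D (shift_down r0 m t) $ i\<bar>"
      by (simp add: h)
    also have "\<dots> \<le> (1 + \<kappa>) * \<bar>s - t\<bar>"
      using D_shift_down_lipschitz[OF D m, where t=s and s=t and i=i] by (simp add: algebra_simps)
    finally show "dist (h s) (h t) \<le> (1 + \<kappa>) * dist s t" by (simp add: dist_real_def)
  qed (use \<kappa> in simp)
  then have "continuous_on {0..T} h" by (rule lipschitz_on_continuous_on)
  then obtain t where "0 \<le> t" "h t = c" using IVT2'[of h T c 0, OF hT h0 T] by blast
  then show ?thesis unfolding h_def by blast
qed

lemma exists_below_Cmin_on_common_level:
  fixes D :: "(real \<Rightarrow> real^'n) \<Rightarrow> real^'n"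
  assumes r0: "r0 \<ge> 0" and A1: "A1 D r0" and A5: "A5 D r0"
    and \<xi>: "\<xi> \<in> Cspace r0" and \<eta>: "\<eta> \<in> Cspace r0"
    and level: "\<xi> 0 $ i - D \<xi> $ i = \<eta> 0 $ i - D \<eta> $ i"
  shows "\<exists>\<zeta>\<in>Cspace r0. Cle r0 \<zeta> (Cmin \<xi> \<eta>) \<and> \<zeta> 0 $ i - D \<zeta> $ i = \<xi> 0 $ i - D \<xi> $ i"
proof -
  obtain \<kappa> where \<kappa>: "0 \<le> \<kappa>" "\<kappa> < 1" and D: "coord_contraction D r0 \<kappa>"
    using A5_imp_coord_contraction[OF A5 r0] by (metis less_imp_le)
  define m where "m = Cmin \<xi> \<eta>"
  have m: "m \<in> Cspace r0" unfolding m_def using Cmin_Cspace[OF \<xi> \<eta>] .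
  have D_mono: "D m $ i \<le> D \<zeta> $ i" if "\<zeta> \<in> Cspace r0" "Cle r0 m \<zeta>" for \<zeta>
    using A1 m that unfolding A1_def by blast
  have "\<xi> 0 $ i - D \<xi> $ i \<le> m 0 $ i - D m $ i"
  proof (cases "\<xi> 0 $ i \<le> \<eta> 0 $ i")
    case True
    with D_mono[OF \<xi>] show ?thesis by (simp add: m_def Cmin_def Cle_def)
  next
    case False
    with D_mono[OF \<eta>] level show ?thesis by (simp add: m_def Cmin_def Cle_def)
  qed
  then obtain t where "t \<ge> 0" "shift_down r0 m t 0 $ i - D (shift_down r0 m t) $ i = \<xi> 0 $ i - D \<xi> $ i"
    using exists_shift_down_on_level[OF r0 \<kappa> D m] by blast
  then show ?thesis using shift_down_Cspace[OF m] Cle_shift_down m_def by blast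
qed

lemma supnorm_shift_down_diff:
  assumes "r0 \<ge> 0"
  shows "supnorm r0 (\<lambda>\<theta>. (shift_down r0 m t :: real \<Rightarrow> real^'n) \<theta> - shift_down r0 m s \<theta>)
           \<le> real CARD('n) * \<bar>t - s\<bar>"
  unfolding supnorm_def
proof (rule cSUP_least)
  show "{-r0..0} \<noteq> {}" using assms by auto
  fix \<theta> assume \<theta>: "\<theta> \<in> {-r0..0}"
  have "norm ((shift_down r0 m t :: real \<Rightarrow> real^'n) \<theta> - shift_down r0 m s \<theta>)
          \<le> (\<Sum>j\<in>UNIV. \<bar>((shift_down r0 m t :: real \<Rightarrow> real^'n) \<theta> - shift_down r0 m s \<theta>) $ j\<bar>)"
    by (rule norm_le_l1_cart)
  also have "\<dots> = real CARD('n) * \<bar>t - s\<bar>" using \<theta> by (simp add: abs_minus_commute)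
  finally show "norm ((shift_down r0 m t :: real \<Rightarrow> real^'n) \<theta> - shift_down r0 m s \<theta>)
                  \<le> real CARD('n) * \<bar>t - s\<bar>" .
qed

lemma shift_down_measurable:
  assumes r0: "r0 \<ge> 0" and m: "m \<in> Cspace r0"
  shows "(shift_down r0 m :: real \<Rightarrow> real \<Rightarrow> real^'n) \<in> measurable borel (Cborel r0)"
  unfolding Cborel_def
proof (rule measurable_measure_of[OF Copen_subset_Pow])
  show "shift_down r0 m \<in> space borel \<rightarrow> Cspace r0" using shift_down_Cspace[OF m] by auto
  fix U :: "(real \<Rightarrow> real^'n) set" assume U: "U \<in> Copen r0"
  define C where "C = real CARD('n) + 1"
  have C: "C > 0" by (simp add: C_def)
  have "open {t. shift_down r0 m t \<in> U}"
    unfolding open_dist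
  proof safe
    fix t assume "shift_down r0 m t \<in> U"
    then obtain e where e: "e > 0"
      and ball: "{g \<in> Cspace r0. supnorm r0 (\<lambda>\<theta>. g \<theta> - shift_down r0 m t \<theta>) < e} \<subseteq> U"
      using U unfolding Copen_def by blast
    have "shift_down r0 m s \<in> U" if "dist s t < e / C" for s
    proof -
      have "supnorm r0 (\<lambda>\<theta>. shift_down r0 m s \<theta> - shift_down r0 m t \<theta>) \<le> real CARD('n) * \<bar>s - t\<bar>"
        by (rule supnorm_shift_down_diff[OF r0])
      also have "\<dots> \<le> C * \<bar>s - t\<bar>" unfolding C_def by (intro mult_right_mono) auto
      also have "\<dots> < e" using that C by (simp add: dist_real_def field_simps)
      finally show ?thesis using ball shift_down_Cspace[OF m] by blast
    qed
    then show "\<exists>d>0. \<forall>s. dist s t < d \<longrightarrow> s \<in> {t. shift_down r0 m t \<in> U}"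
      using e C by (intro exI[of _ "e / C"]) auto
  qed
  then show "shift_down r0 m -` U \<inter> space borel \<in> sets borel" by (simp add: vimage_def)
qed

lemma Dle_shift_down_zero:
  fixes D :: "(real \<Rightarrow> real^'n) \<Rightarrow> real^'n"
  assumes r0: "r0 \<ge> 0" and \<kappa>: "0 \<le> \<kappa>" "\<kappa> < 1" and D: "coord_contraction D r0 \<kappa>"
    and \<xi>: "\<xi> \<in> Cspace r0" and R: "supnorm r0 \<xi> \<le> R"
  shows "Dle D r0 (shift_down r0 (\<lambda>_. 0) ((1 + \<kappa>) / (1 - \<kappa>) * R)) \<xi>"
proof -
  define K where "K = (1 + \<kappa>) / (1 - \<kappa>)"
  define \<zeta> :: "real \<Rightarrow> real^'n" where "\<zeta> = shift_down r0 (\<lambda>_. 0) (K * R)"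
  have K: "K \<ge> 1" using \<kappa> by (simp add: K_def field_simps)
  have R0: "R \<ge> 0" using supnorm_nonneg[OF \<xi> r0] R by simp
  then have KR: "R \<le> K * R" using K by (simp add: mult_right_mono[of 1 K R, simplified])
  have \<xi>_bound: "\<bar>\<xi> \<theta> $ j\<bar> \<le> R" if "\<theta> \<in> {-r0..0}" for \<theta> j
    using component_le_supnorm[OF \<xi> that, of j] R by linarith
  have \<zeta>: "\<theta> \<in> {-r0..0} \<Longrightarrow> \<zeta> \<theta> $ j = - (K * R)" for \<theta> j
    by (simp add: \<zeta>_def)
  have "Cle r0 \<zeta> \<xi>"
    unfolding Cle_def
  proof (intro ballI allI)
    fix \<theta> j assume \<theta>: "\<theta> \<in> {-r0..0}"
    show "\<zeta> \<theta> $ j \<le> \<xi> \<theta> $ j" using \<zeta>[OF \<theta>] \<xi>_bound[OF \<theta>, of j] KR by (simp add: abs_le_iff)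
  qed
  moreover have "\<zeta> 0 $ i - D \<zeta> $ i \<le> \<xi> 0 $ i - D \<xi> $ i" for i
  proof -
    have "\<bar>D \<xi> $ i - D \<zeta> $ i\<bar> \<le> \<kappa> * (R + K * R)"
    proof (rule coord_contractionD[OF D \<xi>])
      show "\<zeta> \<in> Cspace r0" unfolding \<zeta>_def by (rule shift_down_Cspace[OF zero_Cspace])
      show "\<bar>\<xi> \<theta> $ j - \<zeta> \<theta> $ j\<bar> \<le> R + K * R" if "\<theta> \<in> {-r0..0}" for \<theta> j
        using \<xi>_bound[OF that, of j] KR R0 by (simp add: \<zeta>[OF that] abs_le_iff)
    qed
    \<comment> \<open>\<open>K\<close> is chosen so that \<open>\<kappa> (R + K R) = K R - R\<close>\<close>
    also have "\<kappa> * (R + K * R) = K * R - R"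
      using \<kappa> by (simp add: K_def field_simps)
    finally show ?thesis
      using \<zeta>[of 0 i] \<xi>_bound[of 0 i] r0 by (simp add: abs_le_iff)
  qed
  ultimately have "Dle D r0 \<zeta> \<xi>" by (simp add: Dle_def)
  then show ?thesis by (simp add: \<zeta>_def K_def)
qed

lemma (in prob_space) distr_pair_snd:
  assumes "prob_space N"
  shows "distr (N \<Otimes>\<^sub>M M) M snd = M"
proof (intro measure_eqI)
  interpret N: prob_space N by fact
  fix A assume A: "A \<in> sets (distr (N \<Otimes>\<^sub>M M) M snd)"
  then have "emeasure (distr (N \<Otimes>\<^sub>M M) M snd) A = emeasure (N \<Otimes>\<^sub>M M) (space N \<times> A)"
    by (auto simp: emeasure_distr space_pair_measure dest: sets.sets_into_space
        intro!: arg_cong2[where f=emeasure])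
  with A show "emeasure (distr (N \<Otimes>\<^sub>M M) M snd) A = emeasure M A"
    by (simp add: emeasure_pair_measure_Times N.emeasure_space_1)
qed simp

lemma Dle_meas_distr:
  assumes P: "prob_space P" and G: "G \<in> measurable P (Cborel r0)"
    and \<pi>: "\<pi> \<in> measurable P M" "distr P M \<pi> = M" and M: "sets M = sets (Cborel r0)"
    and le: "\<And>p. p \<in> space P \<Longrightarrow> Dle D r0 (G p) (\<pi> p)"
  shows "Dle_meas D r0 (distr P (Cborel r0) G) M"
  unfolding Dle_meas_def
proof (intro allI impI)
  interpret prob_space P by (rule P)
  fix f assume f: "f \<in> borel_measurable (Cborel r0)" and "\<exists>c. \<forall>x\<in>Cspace r0. \<bar>f x\<bar> \<le> c"
    and f_mono: "D_increasing D r0 f"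
  then obtain c where c: "\<forall>x\<in>Cspace r0. \<bar>f x\<bar> \<le> c" by blast
  have space_M: "space M = Cspace r0" using sets_eq_imp_space_eq[OF M] by simp
  have f_M: "f \<in> borel_measurable M" using f by (simp add: measurable_cong_sets[OF M refl])
  have G_in: "G p \<in> Cspace r0" and \<pi>_in: "\<pi> p \<in> Cspace r0" if "p \<in> space P" for p
    using measurable_space[OF G that] measurable_space[OF \<pi>(1) that] space_M by auto
  have "(\<integral>x. f x \<partial>distr P (Cborel r0) G) = (\<integral>p. f (G p) \<partial>P)"
    by (rule integral_distr[OF G f])
  also have "\<dots> \<le> (\<integral>p. f (\<pi> p) \<partial>P)"
  proof (rule integral_mono)
    show "integrable P (\<lambda>p. f (G p))" "integrable P (\<lambda>p. f (\<pi> p))"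
      using c G_in \<pi>_in measurable_compose[OF G f] measurable_compose[OF \<pi>(1) f_M]
      by (auto intro!: integrable_const_bound[where B=c])
  qed (use f_mono le G_in \<pi>_in in \<open>auto simp: D_increasing_def\<close>)
  also have "\<dots> = (\<integral>x. f x \<partial>M)"
    using integral_distr[OF \<pi>(1) f_M] \<pi>(2) by simp
  finally show "(\<integral>x. f x \<partial>distr P (Cborel r0) G) \<le> (\<integral>x. f x \<partial>M)" .
qed

lemma P2_distr_pair:
  assumes r0: "r0 \<ge> 0" and \<mu>: "\<mu> \<in> P2 r0" and \<nu>: "\<nu> \<in> P2 r0"
    and G: "G \<in> measurable (\<mu> \<Otimes>\<^sub>M \<nu>) (Cborel r0)"
    and bound: "\<And>\<xi> \<eta>. \<xi> \<in> Cspace r0 \<Longrightarrow> \<eta> \<in> Cspace r0 \<Longrightarrow>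
       supnorm r0 (G (\<xi>, \<eta>)) \<le> C * max (supnorm r0 \<xi>) (supnorm r0 \<eta>)"
  shows "distr (\<mu> \<Otimes>\<^sub>M \<nu>) (Cborel r0) G \<in> P2 r0"
proof -
  have sets_\<mu>: "sets \<mu> = sets (Cborel r0)" and sets_\<nu>: "sets \<nu> = sets (Cborel r0)"
    using \<mu> \<nu> by (auto simp: P2_def)
  interpret \<mu>: prob_space \<mu> using \<mu> by (simp add: P2_def)
  interpret \<nu>: prob_space \<nu> using \<nu> by (simp add: P2_def)
  interpret pair_prob_space \<mu> \<nu> ..
  let ?P = "\<mu> \<Otimes>\<^sub>M \<nu>" and ?m2 = "\<lambda>\<xi>. ennreal ((supnorm r0 \<xi>)\<^sup>2)"
  have [measurable]: "supnorm r0 \<in> borel_measurable \<mu>" "supnorm r0 \<in> borel_measurable \<nu>"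
    "supnorm r0 \<in> borel_measurable (Cborel r0)"
    using supnorm_measurable[OF _ r0] sets_\<mu> sets_\<nu> by auto
  have space_P: "space ?P = Cspace r0 \<times> Cspace r0"
    using sets_eq_imp_space_eq[OF sets_\<mu>] sets_eq_imp_space_eq[OF sets_\<nu>]
    by (simp add: space_pair_measure)
  have G_bound: "(supnorm r0 (G p))\<^sup>2 \<le> C\<^sup>2 * (supnorm r0 (fst p))\<^sup>2 + C\<^sup>2 * (supnorm r0 (snd p))\<^sup>2"
    if p: "p \<in> space ?P" for p
  proof -
    have "G p \<in> Cspace r0" using measurable_space[OF G p] by simp
    then have "(supnorm r0 (G p))\<^sup>2 \<le> (C * max (supnorm r0 (fst p)) (supnorm r0 (snd p)))\<^sup>2"
      using bound[of "fst p" "snd p"] p supnorm_nonneg[OF _ r0] by (auto simp: space_P intro!: power_mono)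
    also have "\<dots> \<le> C\<^sup>2 * (supnorm r0 (fst p))\<^sup>2 + C\<^sup>2 * (supnorm r0 (snd p))\<^sup>2"
      by (simp add: power_mult_distrib max_def distrib_left[symmetric] mult_left_mono)
    finally show ?thesis .
  qed
  have "(\<integral>\<^sup>+ \<xi>. ?m2 \<xi> \<partial>distr ?P (Cborel r0) G) = (\<integral>\<^sup>+ p. ?m2 (G p) \<partial>?P)"
    by (rule nn_integral_distr[OF G]) measurable
  also have "\<dots> \<le> (\<integral>\<^sup>+ p. ennreal (C\<^sup>2) * ?m2 (fst p) + ennreal (C\<^sup>2) * ?m2 (snd p) \<partial>?P)"
    using G_bound by (intro nn_integral_mono)
      (simp add: ennreal_mult[symmetric] ennreal_plus[symmetric] del: ennreal_plus)
  also have "\<dots> = ennreal (C\<^sup>2) * (\<integral>\<^sup>+ p. ?m2 (fst p) \<partial>?P) + ennreal (C\<^sup>2) * (\<integral>\<^sup>+ p. ?m2 (snd p) \<partial>?P)"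
    by (simp add: nn_integral_add nn_integral_cmult)
  also have "(\<integral>\<^sup>+ p. ?m2 (fst p) \<partial>?P) = (\<integral>\<^sup>+ \<xi>. ?m2 \<xi> \<partial>\<mu>)"
  proof -
    have "(\<integral>\<^sup>+ \<xi>. ?m2 \<xi> \<partial>distr ?P \<mu> fst) = (\<integral>\<^sup>+ p. ?m2 (fst p) \<partial>?P)"
      by (rule nn_integral_distr) (simp_all add: \<nu>.distr_pair_fst)
    then show ?thesis by (simp add: \<nu>.distr_pair_fst)
  qed
  also have "(\<integral>\<^sup>+ p. ?m2 (snd p) \<partial>?P) = (\<integral>\<^sup>+ \<eta>. ?m2 \<eta> \<partial>\<nu>)"
  proof -
    have "(\<integral>\<^sup>+ \<eta>. ?m2 \<eta> \<partial>distr ?P \<nu> snd) = (\<integral>\<^sup>+ p. ?m2 (snd p) \<partial>?P)"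
      by (rule nn_integral_distr) (simp_all add: \<nu>.distr_pair_snd[OF \<mu>.prob_space_axioms])
    then show ?thesis by (simp add: \<nu>.distr_pair_snd[OF \<mu>.prob_space_axioms])
  qed
  also have "ennreal (C\<^sup>2) * (\<integral>\<^sup>+ \<xi>. ?m2 \<xi> \<partial>\<mu>) + ennreal (C\<^sup>2) * (\<integral>\<^sup>+ \<eta>. ?m2 \<eta> \<partial>\<nu>) < \<infinity>"
    using \<mu> \<nu> by (simp add: P2_def ennreal_mult_less_top)
  finally show ?thesis
    using prob_space.prob_space_distr[OF prob_space_axioms G] by (simp add: P2_def)
qed

lemma P2_exists_common_Dle_lower_bound:
  fixes D :: "(real \<Rightarrow> real^'n) \<Rightarrow> real^'n" and \<mu> \<nu> :: "(real \<Rightarrow> real^'n) measure"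
  assumes r0: "r0 \<ge> 0" and A5: "A5 D r0" and \<mu>: "\<mu> \<in> P2 r0" and \<nu>: "\<nu> \<in> P2 r0"
  shows "\<exists>\<mu>'\<in>P2 r0. Dle_meas D r0 \<mu>' \<mu> \<and> Dle_meas D r0 \<mu>' \<nu>"
proof -
  obtain \<kappa> where \<kappa>: "0 < \<kappa>" "\<kappa> < 1" and D: "coord_contraction D r0 \<kappa>"
    using A5_imp_coord_contraction[OF A5 r0] by blast
  define K where "K = (1 + \<kappa>) / (1 - \<kappa>)"
  define R where "R p = max (supnorm r0 (fst p)) (supnorm r0 (snd p))"
    for p :: "(real \<Rightarrow> real^'n) \<times> (real \<Rightarrow> real^'n)"
  define G where "G p = (shift_down r0 (\<lambda>_. 0) (K * R p) :: real \<Rightarrow> real^'n)" for p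
  let ?P = "\<mu> \<Otimes>\<^sub>M \<nu>"
  have sets_\<mu>: "sets \<mu> = sets (Cborel r0)" and sets_\<nu>: "sets \<nu> = sets (Cborel r0)"
    using \<mu> \<nu> by (auto simp: P2_def)
  interpret \<mu>: prob_space \<mu> using \<mu> by (simp add: P2_def)
  interpret \<nu>: prob_space \<nu> using \<nu> by (simp add: P2_def)
  interpret pair_prob_space \<mu> \<nu> ..
  have [measurable]: "supnorm r0 \<in> borel_measurable \<mu>" "supnorm r0 \<in> borel_measurable \<nu>"
    using supnorm_measurable[OF _ r0] sets_\<mu> sets_\<nu> by auto
  have "R \<in> borel_measurable ?P" unfolding R_def by measurable
  then have G: "G \<in> measurable ?P (Cborel r0)"
    unfolding G_def using shift_down_measurable[OF r0 zero_Cspace] by measurable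
  have space_P: "space ?P = Cspace r0 \<times> Cspace r0"
    using sets_eq_imp_space_eq[OF sets_\<mu>] sets_eq_imp_space_eq[OF sets_\<nu>]
    by (simp add: space_pair_measure)
  have "distr ?P (Cborel r0) G \<in> P2 r0"
  proof (rule P2_distr_pair[OF r0 \<mu> \<nu> G])
    fix \<xi> \<eta> :: "real \<Rightarrow> real^'n" assume "\<xi> \<in> Cspace r0"
    then have "0 \<le> R (\<xi>, \<eta>)" using supnorm_nonneg[OF _ r0, of \<xi>] by (simp add: R_def le_max_iff_disj)
    moreover have "0 \<le> K" using \<kappa> by (simp add: K_def)
    ultimately have "0 \<le> K * R (\<xi>, \<eta>)" by simp
    then show "supnorm r0 (G (\<xi>, \<eta>)) \<le> real CARD('n) * K * max (supnorm r0 \<xi>) (supnorm r0 \<eta>)"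
      using supnorm_shift_down_diff[OF r0, of "\<lambda>_. 0" "K * R (\<xi>, \<eta>)" 0]
      by (simp add: G_def R_def shift_down_0[OF zero_Cspace] mult.assoc)
  qed
  moreover have "Dle D r0 (G p) (fst p)" "Dle D r0 (G p) (snd p)" if "p \<in> space ?P" for p
    using that Dle_shift_down_zero[OF r0 less_imp_le[OF \<kappa>(1)] \<kappa>(2) D]
    by (auto simp: space_P G_def K_def R_def)
  ultimately show ?thesis
    using Dle_meas_distr[OF prob_space_axioms G measurable_fst \<nu>.distr_pair_fst sets_\<mu>]
      Dle_meas_distr[OF prob_space_axioms G measurable_snd \<nu>.distr_pair_snd[OF \<mu>.prob_space_axioms] sets_\<nu>]
    by blast
qed

theorem lemma4p3:
  fixes D :: "(real \<Rightarrow> real^'n) \<Rightarrow> real^'n" and r0 :: real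
  assumes "r0 > 0" and "A1 D r0" and "A5 D r0"
  shows "(\<forall>i. \<forall>\<xi>\<in>Cspace r0. \<forall>\<eta>\<in>Cspace r0.
            \<xi> 0 $ i - D \<xi> $ i = \<eta> 0 $ i - D \<eta> $ i \<longrightarrow>
            (\<exists>\<zeta>\<in>Cspace r0. Cle r0 \<zeta> (Cmin \<xi> \<eta>) \<and>
               \<zeta> 0 $ i - D \<zeta> $ i = \<xi> 0 $ i - D \<xi> $ i \<and>
               \<zeta> 0 $ i - D \<zeta> $ i = \<eta> 0 $ i - D \<eta> $ i))
      \<and> (\<forall>\<mu>\<in>P2 r0. \<forall>\<nu>\<in>P2 r0. \<exists>\<mu>'\<in>P2 r0. Dle_meas D r0 \<mu>' \<mu> \<and> Dle_meas D r0 \<mu>' \<nu>)"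
proof -
  have r0: "r0 \<ge> 0" using assms(1) by simp
  show ?thesis
    using exists_below_Cmin_on_common_level[OF r0 assms(2,3)]
      P2_exists_common_Dle_lower_bound[OF r0 assms(3)]
    by metis
qed

end
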